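(* Let $t$ be a positive integer with $3\nmid t$. Then for every positive integer $n$, $$b^{2}_{3,2t}(4n+3)\equiv 0 \pmod 4.$$
   Context: For integers $r\ge1$ write $f_r=\prod_{j\ge1}(1-q^{rj})$. For coprime positive integers $\ell,m$ and a positive integer $k$, $b^{k}_{\ell,m}(n)$ denotes the number of $k$-colored partitions of $n$ (each part receives one of $k$ colors) into parts not divisible by $\ell$ or by $m$; equivalently $\sum_{n\ge0} b^{k}_{\ell,m}(n)q^n=\dfrac{f_\ell^k f_m^k}{f_1^k f_{\ell m}^k}$. In particular $\sum_{n\ge0} b^{2}_{3,2t}(n)q^n=\dfrac{f_3^2f_{2t}^2}{f_1^2f_{6t}^2}$. *)

theory Defs
  imports Main "HOL-Library.Multiset"
begin

definition colored_partitions_avoiding :: "nat \<Rightarrow> nat \<Rightarrow> nat \<Rightarrow> nat \<Rightarrow> (nat \<times> nat) multiset set" where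
  "colored_partitions_avoiding k l m n =
     {M. (\<forall>x \<in># M. fst x \<ge> 1 \<and> snd x < k \<and> \<not> l dvd fst x \<and> \<not> m dvd fst x)
         \<and> sum_mset (image_mset fst M) = n}"

definition b_part :: "nat \<Rightarrow> nat \<Rightarrow> nat \<Rightarrow> nat \<Rightarrow> nat" where
  "b_part k l m n = card (colored_partitions_avoiding k l m n)"

end

theory Submission
  imports Defs "HOL-Computational_Algebra.Formal_Power_Series"
begin

unbundle fps_syntax

text \<open>
  Let B be the generating function of partitions into parts divisible neither by 3 nor by 2t,
  so that b(N) is the coefficient of q^N in B^2. Since
  1/(1 - q^j)^2 = (1 + 2 q^j/(1 - q^j)) / (1 - q^(2j)), we have B^2 \<equiv> B(q^2) (1 + 2 S) (mod 4),
  where S is the sum of q^j/(1 - q^j) over the allowed parts j; so at an odd exponent N only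
  2 B(q^2) S contributes modulo 4. For odd k the coefficient of q^k in S counts the divisors of k
  prime to 3, whose parity is that of [k is a square] + [k is three times a square], the
  coefficient of q^k in q Z(q^2), where Z = \<psi>(q^4) + q \<psi>(q^12) and \<psi>(q) = \<Sum> q^(a(a+1)/2).
  Hence b(N) \<equiv> 2 [q^((N-1)/2)] V (mod 4) for V = B Z, and for N = 4n + 3 it remains to see that
  V has even coefficients at odd exponents. As V(0) is odd, it suffices that the odd coefficients
  of V^2 are divisible by 4; with the Frobenius congruence f^2 \<equiv> f(q^2) (mod 2) this reduces to
  \<psi>(q) \<psi>(q^3) \<equiv> Z (mod 2). That is a parity count of the representations 4m = x^2 + 3y^2 with
  x, y positive and odd, done with an involution whose fixed points are those with x = y or x = 3y.
\<close>

lemma sum_involution_dvd: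
  fixes g :: "'a \<Rightarrow> 'b::comm_ring_1"
  assumes "finite A" "\<forall>x\<in>A. \<sigma> x \<in> A \<and> \<sigma> (\<sigma> x) = x"
    and "\<forall>x\<in>A. \<sigma> x \<noteq> x \<longrightarrow> m dvd g x + g (\<sigma> x)"
  shows "m dvd (\<Sum>x\<in>A. g x) - (\<Sum>x\<in>{x\<in>A. \<sigma> x = x}. g x)"
  using assms
proof (induction "card A" arbitrary: A rule: less_induct)
  case less
  show ?case
  proof (cases "\<exists>x\<in>A. \<sigma> x \<noteq> x")
    case False
    then have "{x\<in>A. \<sigma> x = x} = A" by auto
    then show ?thesis by simp
  next
    case True
    then obtain x where x: "x \<in> A" "\<sigma> x \<noteq> x" by blast
    define A' where "A' = A - {x, \<sigma> x}"
    have "\<sigma> x \<in> A" using less.prems x by auto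
    have "card A' < card A"
      using less.prems x \<open>\<sigma> x \<in> A\<close> unfolding A'_def by (intro psubset_card_mono) auto
    moreover have "finite A'"
      using less.prems(1) by (simp add: A'_def)
    moreover have "\<forall>y\<in>A'. \<sigma> y \<in> A' \<and> \<sigma> (\<sigma> y) = y"
      using less.prems x unfolding A'_def by (metis DiffE DiffI insertCI insertE singletonD)
    moreover have "\<forall>y\<in>A'. \<sigma> y \<noteq> y \<longrightarrow> m dvd g y + g (\<sigma> y)"
      using less.prems(3) by (simp add: A'_def)
    ultimately have IH: "m dvd (\<Sum>y\<in>A'. g y) - (\<Sum>y\<in>{y\<in>A'. \<sigma> y = y}. g y)"
      by (rule less.hyps)
    have "(\<Sum>y\<in>A. g y) = g x + (\<Sum>y\<in>A - {x}. g y)"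
      using x less.prems by (simp add: sum.remove)
    also have "(\<Sum>y\<in>A - {x}. g y) = g (\<sigma> x) + (\<Sum>y\<in>A - {x} - {\<sigma> x}. g y)"
      using x \<open>\<sigma> x \<in> A\<close> less.prems by (intro sum.remove) auto
    also have "A - {x} - {\<sigma> x} = A'"
      unfolding A'_def by auto
    finally have "(\<Sum>y\<in>A. g y) = g x + g (\<sigma> x) + (\<Sum>y\<in>A'. g y)"
      by (simp add: add.assoc)
    moreover have "{y\<in>A'. \<sigma> y = y} = {y\<in>A. \<sigma> y = y}"
      using x less.prems unfolding A'_def by auto
    moreover have "m dvd g x + g (\<sigma> x)" using less.prems x by auto
    ultimately show ?thesis
      using IH by (metis (no_types, lifting) add_diff_eq dvd_add)
  qed
qed

section \<open>Power series in q^k and congruences\<close>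

lemma fps_compose_X_power_nth:
  fixes f :: "'a::comm_semiring_1 fps"
  assumes "k > 0"
  shows "(f oo fps_X ^ k) $ n = (if k dvd n then f $ (n div k) else 0)"
proof -
  have "(f oo fps_X ^ k) $ n = (\<Sum>i=0..n. if i = n div k \<and> k dvd n then f $ i else 0)"
    unfolding fps_compose_nth power_mult[symmetric] fps_X_power_nth
    by (intro sum.cong) (use assms in auto)
  also have "\<dots> = (if k dvd n then f $ (n div k) else 0)"
    by (simp add: sum.delta' div_le_dividend)
  finally show ?thesis .
qed

lemma fps_compose_X_power_compose:
  fixes f :: "'a::comm_semiring_1 fps"
  assumes "a > 0" "b > 0"
  shows "f oo fps_X ^ a oo fps_X ^ b = f oo fps_X ^ (a * b)"
proof (rule fps_ext)
  fix n
  have "a * b dvd n \<longleftrightarrow> b dvd n \<and> a dvd n div b"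
    using assms by (auto simp: dvd_div_iff_mult dest: dvd_mult_right)
  moreover have "n div (a * b) = n div b div a"
    by (metis div_mult2_eq mult.commute)
  ultimately show "(f oo fps_X ^ a oo fps_X ^ b) $ n = (f oo fps_X ^ (a * b)) $ n"
    using assms by (simp add: fps_compose_X_power_nth)
qed

definition fps_cong :: "'a::comm_ring_1 \<Rightarrow> 'a fps \<Rightarrow> 'a fps \<Rightarrow> bool" where
  "fps_cong m f g \<longleftrightarrow> (\<forall>n. m dvd f $ n - g $ n)"

lemma fps_cong_nth: "fps_cong m f g \<Longrightarrow> m dvd f $ n - g $ n"
  by (simp add: fps_cong_def)

lemma fps_cong_refl [simp]: "fps_cong m f f"
  by (simp add: fps_cong_def)

lemma fps_cong_trans [trans]: "fps_cong m f g \<Longrightarrow> fps_cong m g h \<Longrightarrow> fps_cong m f h"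
  unfolding fps_cong_def by (metis diff_add_cancel dvd_add add_diff_eq diff_diff_eq2)

lemma fps_cong_add: "fps_cong m f g \<Longrightarrow> fps_cong m f' g' \<Longrightarrow> fps_cong m (f + f') (g + g')"
  unfolding fps_cong_def by (auto simp: add_diff_add dvd_add)

lemma fps_cong_mult_right: "fps_cong m f g \<Longrightarrow> fps_cong m (f * h) (g * h)"
proof -
  assume cong: "fps_cong m f g"
  have "(f * h) $ n - (g * h) $ n = (\<Sum>i=0..n. (f $ i - g $ i) * h $ (n - i))" for n
    by (simp add: fps_mult_nth sum_subtractf[symmetric] left_diff_distrib)
  then show ?thesis
    using cong by (simp add: fps_cong_def dvd_sum)
qed

lemma fps_cong_mult: "fps_cong m f g \<Longrightarrow> fps_cong m f' g' \<Longrightarrow> fps_cong m (f * f') (g * g')"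
  by (metis fps_cong_mult_right fps_cong_trans mult.commute)

lemma fps_cong_add_multiple: "fps_cong m (f + fps_const m * h) f"
  by (simp add: fps_cong_def)

lemma fps_cong_compose_X_power:
  "k > 0 \<Longrightarrow> fps_cong m f g \<Longrightarrow> fps_cong m (f oo fps_X ^ k) (g oo fps_X ^ k)"
  by (simp add: fps_cong_def fps_compose_X_power_nth)

lemma fps_cong_prod_one_plus_double:
  fixes h :: "'b \<Rightarrow> 'a::comm_ring_1 fps"
  assumes "finite A"
  shows "fps_cong 4 (\<Prod>j\<in>A. 1 + 2 * h j) (1 + 2 * (\<Sum>j\<in>A. h j))"
  using assms
proof (induction A rule: finite_induct)
  case (insert x A)
  let ?S = "\<Sum>j\<in>A. h j"
  have "(\<Prod>j\<in>insert x A. 1 + 2 * h j) = (1 + 2 * h x) * (\<Prod>j\<in>A. 1 + 2 * h j)"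
    using insert.hyps by simp
  also have "fps_cong 4 \<dots> ((1 + 2 * h x) * (1 + 2 * ?S))"
    by (intro fps_cong_mult fps_cong_refl insert.IH)
  also have "(1 + 2 * h x) * (1 + 2 * ?S) = (1 + 2 * (h x + ?S)) + fps_const 4 * (h x * ?S)"
    by (simp add: algebra_simps numeral_fps_const fps_const_mult[symmetric])
  also have "fps_cong 4 \<dots> (1 + 2 * (h x + ?S))"
    by (rule fps_cong_add_multiple)
  finally show ?case
    using insert.hyps by simp
qed simp

lemma fps_square_cong_compose_X2:
  fixes f :: "int fps"
  shows "fps_cong 2 (f * f) (f oo fps_X ^ 2)"
  unfolding fps_cong_def
proof
  fix n
  define c where "c = (if even n then f $ (n div 2) * f $ (n div 2) else 0)"
  have "2 dvd (f * f) $ n - (\<Sum>i\<in>{i\<in>{0..n}. n - i = i}. f $ i * f $ (n - i))"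
    unfolding fps_mult_nth
  proof (rule sum_involution_dvd)
    show "\<forall>i\<in>{0..n}. n - i \<noteq> i \<longrightarrow> 2 dvd f $ i * f $ (n - i) + f $ (n - i) * f $ (n - (n - i))"
      by (simp add: mult.commute)
  qed auto
  moreover have "(\<Sum>i\<in>{i\<in>{0..n}. n - i = i}. f $ i * f $ (n - i)) = c"
  proof (cases "even n")
    case True
    then have "{i\<in>{0..n}. n - i = i} = {n div 2}" by (auto elim!: evenE)
    moreover have "n - n div 2 = n div 2" using True by auto
    ultimately show ?thesis using True by (simp add: c_def)
  next
    case False
    then have empty: "{i\<in>{0..n}. n - i = i} = {}" by (auto elim!: oddE; arith)
    show ?thesis unfolding empty using False by (simp add: c_def)
  qed
  moreover have "2 dvd c - (f oo fps_X ^ 2) $ n"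
    by (simp add: c_def fps_compose_X_power_nth)
  ultimately have "2 dvd ((f * f) $ n - c) + (c - (f oo fps_X ^ 2) $ n)"
    by (intro dvd_add) simp_all
  then show "2 dvd (f * f) $ n - (f oo fps_X ^ 2) $ n"
    by simp
qed

lemma dvd_odd_nth_compose_X2_mult:
  fixes f g :: "'a::comm_ring_1 fps"
  assumes "\<forall>k\<le>D. odd k \<longrightarrow> m dvd g $ k" and "odd i" "i \<le> D"
  shows "m dvd ((f oo fps_X ^ 2) * g) $ i"
  unfolding fps_mult_nth
proof (rule dvd_sum)
  fix j assume j: "j \<in> {0..i}"
  show "m dvd (f oo fps_X ^ 2) $ j * g $ (i - j)"
  proof (cases "even j")
    case True
    then have "odd (i - j)" "i - j \<le> D" using j assms(2,3) by auto
    then show ?thesis using assms(1) by (simp add: dvd_mult)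
  qed (simp add: fps_compose_X_power_nth)
qed

lemma dvd_inner_convolution_square:
  fixes V :: "int fps"
  assumes "odd i" and "\<forall>j<i. odd j \<longrightarrow> even (V $ j)"
  shows "4 dvd (\<Sum>j\<in>{1..i-1}. V $ j * V $ (i - j))"
proof -
  let ?g = "\<lambda>j. V $ j * V $ (i - j)"
  have "4 dvd (\<Sum>j\<in>{1..i-1}. ?g j) - (\<Sum>j\<in>{j\<in>{1..i-1}. i - j = j}. ?g j)"
  proof (rule sum_involution_dvd)
    show "\<forall>j\<in>{1..i-1}. i - j \<noteq> j \<longrightarrow> 4 dvd ?g j + ?g (i - j)"
    proof (intro ballI impI)
      fix j assume j: "j \<in> {1..i-1}"
      then have "odd j \<or> odd (i - j)" using assms(1) by auto
      moreover have "j < i" "i - j < i" using j assms(1) by (auto simp: odd_pos)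
      ultimately have "even (V $ j) \<or> even (V $ (i - j))"
        using assms(2) by blast
      then obtain k where k: "?g j = 2 * k" by (auto elim!: evenE)
      have "i - (i - j) = j" using j by auto
      then have "?g (i - j) = ?g j" by (simp add: mult.commute)
      with k show "4 dvd ?g j + ?g (i - j)" by simp
    qed
  qed auto
  moreover have "{j\<in>{1..i-1}. i - j = j} = {}"
    using assms(1) by (auto elim!: oddE; arith)
  ultimately show ?thesis
    by (simp only: sum.empty diff_0_right)
qed

lemma even_odd_nth_if_square:
  fixes V :: "int fps"
  assumes "odd (V $ 0)" and "\<forall>i\<le>M. odd i \<longrightarrow> 4 dvd (V * V) $ i"
  shows "odd i \<Longrightarrow> i \<le> M \<Longrightarrow> even (V $ i)"
proof (induction i rule: less_induct)
  case (less i)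
  obtain i' where i': "i = Suc i'" using less.prems by (cases i) auto
  have split: "V $ 0 * V $ i + V $ i * V $ 0
      = (V * V) $ i - (\<Sum>j\<in>{1..i-1}. V $ j * V $ (i - j))"
    unfolding fps_mult_nth i' by (simp add: sum.atLeast_Suc_atMost sum.cl_ivl_Suc)
  have "4 dvd (\<Sum>j\<in>{1..i-1}. V $ j * V $ (i - j))"
    using less by (intro dvd_inner_convolution_square) auto
  moreover have "4 dvd (V * V) $ i"
    using assms(2) less.prems by blast
  ultimately have "4 dvd V $ 0 * V $ i + V $ i * V $ 0"
    unfolding split by (intro dvd_diff)
  moreover have "V $ 0 * V $ i + V $ i * V $ 0 = 2 * (V $ 0 * V $ i)"
    by simp
  ultimately have "4 dvd 2 * (V $ 0 * V $ i)"
    by (simp only:)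
  moreover have "4 dvd 2 * x \<Longrightarrow> even x" for x :: int
    by (auto elim!: dvdE)
  ultimately have "even (V $ 0 * V $ i)"
    by blast
  then show ?case using assms(1) by simp
qed

section \<open>Partition generating functions\<close>

definition fps_geom :: "nat \<Rightarrow> 'a::comm_ring_1 fps" where
  "fps_geom k = Abs_fps (\<lambda>i. of_bool (k dvd i))"

lemma fps_geom_nth [simp]: "fps_geom k $ i = of_bool (k dvd i)"
  by (simp add: fps_geom_def)

lemma fps_geom_compose_X_power:
  assumes "j > 0"
  shows "fps_geom k oo fps_X ^ j = fps_geom (j * k)"
proof (rule fps_ext)
  fix n
  have "j * k dvd n \<longleftrightarrow> j dvd n \<and> k dvd n div j"
    using assms by (auto simp: dvd_div_iff_mult mult.commute dest: dvd_mult_right)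
  then show "(fps_geom k oo fps_X ^ j) $ n = fps_geom (j * k) $ n"
    using assms by (simp add: fps_compose_X_power_nth)
qed

lemma fps_X_power_mult_geom:
  assumes "k > 0"
  shows "fps_X ^ k * fps_geom k = fps_geom k - 1"
proof (rule fps_ext)
  fix n
  have "k dvd n \<longleftrightarrow> (n = 0 \<or> (k \<le> n \<and> k dvd n - k))"
    using assms by (auto simp: dvd_diff_nat dest: dvd_imp_le)
      (metis dvd_add dvd_refl le_add_diff_inverse2)
  then show "(fps_X ^ k * fps_geom k) $ n = (fps_geom k - 1 :: 'a fps) $ n"
    using assms by (auto simp: fps_X_power_mult_nth)
qed

lemma fps_geom_inverse:
  assumes "k > 0"
  shows "(1 - fps_X ^ k) * fps_geom k = (1 :: 'a::comm_ring_1 fps)"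
proof -
  have "(1 - fps_X ^ k) * fps_geom k = fps_geom k - fps_X ^ k * (fps_geom k :: 'a fps)"
    by (simp add: left_diff_distrib)
  also have "\<dots> = 1"
    by (simp add: fps_X_power_mult_geom assms)
  finally show ?thesis .
qed

lemma fps_geom_eq_mult_geom_double:
  assumes "k > 0"
  shows "fps_geom k = (1 + fps_X ^ k) * (fps_geom (2 * k) :: 'a::comm_ring_1 fps)"
proof -
  have "fps_geom k = fps_geom k * ((1 - fps_X ^ (2 * k)) * (fps_geom (2 * k) :: 'a fps))"
    using assms by (simp add: fps_geom_inverse)
  also have "\<dots> = ((1 - fps_X ^ k) * fps_geom k) * (1 + fps_X ^ k) * fps_geom (2 * k)"
    by (simp add: algebra_simps power_mult power2_eq_square)
  finally show ?thesis
    using assms by (simp add: fps_geom_inverse)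
qed

lemma fps_geom_square:
  assumes "k > 0"
  shows "fps_geom k * fps_geom k
    = (fps_geom k oo fps_X ^ 2) * (1 + 2 * (fps_geom k - 1) :: 'a::comm_ring_1 fps)"
proof -
  have "fps_geom k * fps_geom k = fps_geom k * ((1 + fps_X ^ k) * (fps_geom (2 * k) :: 'a fps))"
    using fps_geom_eq_mult_geom_double[OF assms] by (rule arg_cong)
  also have "\<dots> = fps_geom (2 * k) * (fps_geom k + fps_X ^ k * fps_geom k)"
    by (simp add: algebra_simps)
  also have "\<dots> = fps_geom (2 * k) * (1 + 2 * (fps_geom k - 1))"
    unfolding fps_X_power_mult_geom[OF assms] by (simp add: algebra_simps)
  also have "fps_geom (2 * k) = (fps_geom k oo fps_X ^ 2 :: 'a fps)"
    by (simp add: fps_geom_compose_X_power)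
  finally show ?thesis .
qed

lemma prod_geom_square_cong:
  fixes K :: "nat set"
  assumes "finite K" "0 \<notin> K"
  shows "fps_cong 4 ((\<Prod>j\<in>K. fps_geom j) * (\<Prod>j\<in>K. fps_geom j))
    (((\<Prod>j\<in>K. fps_geom j) oo fps_X ^ 2) * (1 + 2 * (\<Sum>j\<in>K. fps_geom j - 1 :: 'a::idom fps)))"
proof -
  have "(\<Prod>j\<in>K. fps_geom j) * (\<Prod>j\<in>K. fps_geom j) = (\<Prod>j\<in>K. fps_geom j * (fps_geom j :: 'a fps))"
    by (simp add: prod.distrib)
  also have "\<dots> = (\<Prod>j\<in>K. (fps_geom j oo fps_X ^ 2) * (1 + 2 * (fps_geom j - 1)))"
    using assms(2) by (intro prod.cong refl fps_geom_square) (auto intro: gr0I)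
  also have "\<dots> = ((\<Prod>j\<in>K. fps_geom j) oo fps_X ^ 2) * (\<Prod>j\<in>K. 1 + 2 * (fps_geom j - 1))"
    by (simp add: prod.distrib fps_compose_prod_distrib)
  also have "fps_cong 4 \<dots> (((\<Prod>j\<in>K. fps_geom j) oo fps_X ^ 2) * (1 + 2 * (\<Sum>j\<in>K. fps_geom j - 1)))"
    by (intro fps_cong_mult fps_cong_refl fps_cong_prod_one_plus_double assms(1))
  finally show ?thesis .
qed

definition multisets_of_weight :: "'a set \<Rightarrow> ('a \<Rightarrow> nat) \<Rightarrow> nat \<Rightarrow> 'a multiset set" where
  "multisets_of_weight A w n = {M. set_mset M \<subseteq> A \<and> sum_mset (image_mset w M) = n}"

lemma fps_geom_mult_nth:
  assumes "k > 0"
  shows "(fps_geom k * f) $ n = (\<Sum>c=0..n div k. f $ (n - c * k))"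
proof -
  have "(fps_geom k * f) $ n = (\<Sum>i\<in>(\<lambda>c. c * k) ` {0..n div k}. f $ (n - i))"
    unfolding fps_mult_nth
  proof (rule sum.mono_neutral_cong_right)
    show "(\<lambda>c. c * k) ` {0..n div k} \<subseteq> {0..n}"
      by auto (metis div_times_less_eq_dividend le_trans mult_le_mono1)
    show "\<forall>i\<in>{0..n} - (\<lambda>c. c * k) ` {0..n div k}. fps_geom k $ i * f $ (n - i) = 0"
    proof
      fix i assume i: "i \<in> {0..n} - (\<lambda>c. c * k) ` {0..n div k}"
      show "fps_geom k $ i * f $ (n - i) = 0"
      proof (cases "k dvd i")
        case True
        then obtain c where "i = c * k" by (metis dvdE mult.commute)
        with i assms show ?thesis by (auto simp: less_eq_div_iff_mult_less_eq)
      qed simp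
    qed
  qed auto
  also have "\<dots> = (\<Sum>c=0..n div k. f $ (n - c * k))"
    using assms by (subst sum.reindex) (auto simp: inj_on_def)
  finally show ?thesis .
qed

lemma multisets_of_weight_insert:
  assumes "w a > 0"
  shows "multisets_of_weight (insert a A) w n
    = (\<Union>c\<in>{0..n div w a}. (\<lambda>M. replicate_mset c a + M) ` multisets_of_weight A w (n - c * w a))"
proof (intro equalityI subsetI)
  fix M assume M: "M \<in> multisets_of_weight (insert a A) w n"
  define M' where "M' = filter_mset (\<lambda>x. x \<noteq> a) M"
  have MM: "M = replicate_mset (count M a) a + M'"
    unfolding M'_def by (metis filter_eq_replicate_mset multiset_partition)
  have "count M a * w a + sum_mset (image_mset w M') = n"
    using M by (subst (asm) MM) (simp add: multisets_of_weight_def)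
  moreover have "set_mset M' \<subseteq> A"
    using M unfolding multisets_of_weight_def M'_def by auto
  ultimately have "count M a \<le> n div w a" "M' \<in> multisets_of_weight A w (n - count M a * w a)"
    using assms by (auto simp: multisets_of_weight_def less_eq_div_iff_mult_less_eq)
  then show "M \<in> (\<Union>c\<in>{0..n div w a}.
      (\<lambda>M. replicate_mset c a + M) ` multisets_of_weight A w (n - c * w a))"
    using MM by auto
next
  fix M assume "M \<in> (\<Union>c\<in>{0..n div w a}.
      (\<lambda>M. replicate_mset c a + M) ` multisets_of_weight A w (n - c * w a))"
  then obtain c M' where "c \<le> n div w a" "M' \<in> multisets_of_weight A w (n - c * w a)"
    and "M = replicate_mset c a + M'" by auto
  moreover from \<open>c \<le> n div w a\<close> have "c * w a \<le> n"
    using assms by (simp add: less_eq_div_iff_mult_less_eq)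
  ultimately show "M \<in> multisets_of_weight (insert a A) w n"
    by (auto simp: multisets_of_weight_def)
qed

lemma card_multisets_of_weight:
  assumes "finite A" "\<forall>a\<in>A. w a > 0"
  shows "finite (multisets_of_weight A w n)
    \<and> int (card (multisets_of_weight A w n)) = (\<Prod>a\<in>A. fps_geom (w a)) $ n"
  using assms
proof (induction A arbitrary: n rule: finite_induct)
  case empty
  have "multisets_of_weight {} w n = (if n = 0 then {{#}} else {})"
    by (auto simp: multisets_of_weight_def)
  then show ?case by simp
next
  case (insert a A)
  let ?k = "w a"
  let ?F = "\<lambda>c. (\<lambda>M. replicate_mset c a + M) ` multisets_of_weight A w (n - c * ?k)"
  have k: "?k > 0" using insert.prems by auto
  have IH: "finite (multisets_of_weight A w m)"
    "int (card (multisets_of_weight A w m)) = (\<Prod>a\<in>A. fps_geom (w a)) $ m" for m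
    using insert.IH insert.prems by auto
  have disjoint: "?F c \<inter> ?F c' = {}" if "c \<noteq> c'" for c c'
  proof -
    have no_a: "count M a = 0" if "M \<in> multisets_of_weight A w m" for M m
      using that insert.hyps(2) by (auto simp: multisets_of_weight_def count_eq_zero_iff)
    have "c = c'" if "M1 \<in> multisets_of_weight A w m1" "M2 \<in> multisets_of_weight A w m2"
      and "replicate_mset c a + M1 = replicate_mset c' a + M2" for M1 M2 m1 m2
      using arg_cong[OF that(3), of "\<lambda>M. count M a"] no_a[OF that(1)] no_a[OF that(2)] by simp
    then show ?thesis
      using \<open>c \<noteq> c'\<close> by blast
  qed
  have "card (multisets_of_weight (insert a A) w n)
      = (\<Sum>c=0..n div ?k. card (multisets_of_weight A w (n - c * ?k)))"
    unfolding multisets_of_weight_insert[of w a, OF k] using IH(1) disjoint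
    by (subst card_UN_disjoint) (auto simp: card_image inj_on_def)
  then have "int (card (multisets_of_weight (insert a A) w n))
      = (fps_geom ?k * (\<Prod>a\<in>A. fps_geom (w a))) $ n"
    by (simp add: IH(2) fps_geom_mult_nth[OF k])
  then show ?case
    using insert.hyps IH(1) by (simp add: multisets_of_weight_insert[of w a, OF k])
qed

definition allowed_parts :: "nat \<Rightarrow> nat \<Rightarrow> nat set" where
  "allowed_parts t D = {j\<in>{1..D}. \<not> 3 dvd j \<and> \<not> 2 * t dvd j}"

lemma finite_allowed_parts [simp]: "finite (allowed_parts t D)"
  by (simp add: allowed_parts_def)

definition partition_gf :: "nat \<Rightarrow> nat \<Rightarrow> int fps" where
  "partition_gf t D = (\<Prod>j\<in>allowed_parts t D. fps_geom j)"

lemma b_part_eq_partition_gf_square: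
  assumes "n \<le> D"
  shows "int (b_part 2 3 (2 * t) n) = (partition_gf t D * partition_gf t D) $ n"
proof -
  let ?A = "allowed_parts t D \<times> {0::nat, 1}"
  have "colored_partitions_avoiding 2 3 (2 * t) n = multisets_of_weight ?A fst n"
  proof (intro equalityI subsetI)
    fix M assume M: "M \<in> colored_partitions_avoiding 2 3 (2 * t) n"
    have "fst x \<le> n" if "x \<in># M" for x
      using M that by (auto simp: colored_partitions_avoiding_def dest!: multi_member_split)
    then have "set_mset M \<subseteq> ?A"
      using M assms by (force simp: colored_partitions_avoiding_def allowed_parts_def)
    then show "M \<in> multisets_of_weight ?A fst n"
      using M by (auto simp: multisets_of_weight_def colored_partitions_avoiding_def)
  qed (auto simp: multisets_of_weight_def colored_partitions_avoiding_def allowed_parts_def)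
  moreover have "\<forall>a\<in>?A. fst a > 0"
    by (auto simp: allowed_parts_def)
  ultimately have "int (b_part 2 3 (2 * t) n) = (\<Prod>a\<in>?A. fps_geom (fst a)) $ n"
    using card_multisets_of_weight[of ?A fst n] by (simp add: b_part_def)
  also have "(\<Prod>a\<in>?A. fps_geom (fst a)) = (\<Prod>j\<in>allowed_parts t D. \<Prod>c\<in>{0::nat, 1}. fps_geom j)"
    unfolding prod.cartesian_product by (rule prod.cong) auto
  also have "\<dots> = partition_gf t D * partition_gf t D"
    by (simp add: partition_gf_def prod.distrib)
  finally show ?thesis .
qed

section \<open>Divisors, squares and triangular numbers\<close>

definition sq_or_3sq :: "nat \<Rightarrow> int" where
  "sq_or_3sq m = of_bool (\<exists>r. m = r\<^sup>2) + of_bool (\<exists>r. m = 3 * r\<^sup>2)"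

lemma card_mult_square_roots:
  assumes "c > 0"
  shows "card {r::nat. c * r\<^sup>2 = m} = of_bool (\<exists>r. m = c * r\<^sup>2)"
proof (cases "\<exists>r. m = c * r\<^sup>2")
  case True
  then obtain r where "m = c * r\<^sup>2" by blast
  with assms have "{r::nat. c * r\<^sup>2 = m} = {r}" by auto
  with True show ?thesis by simp
next
  case False
  then have "{r::nat. c * r\<^sup>2 = m} = {}" by auto
  with False show ?thesis by simp
qed

lemma card_divisors_parity:
  fixes m :: nat
  assumes "m > 0"
  shows "2 dvd int (card {d. d dvd m}) - of_bool (\<exists>r. m = r\<^sup>2)"
proof -
  have "2 dvd (\<Sum>d\<in>{d. d dvd m}. 1::int) - (\<Sum>d\<in>{d\<in>{d. d dvd m}. m div d = d}. 1)"
    using assms by (intro sum_involution_dvd) (auto simp: finite_divisors_nat)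
  moreover have "{d\<in>{d. d dvd m}. m div d = d} = {r. 1 * r\<^sup>2 = m}"
    by (auto simp: power2_eq_square) (metis dvd_mult_div_cancel)
  ultimately show ?thesis
    using card_mult_square_roots[of 1 m] by simp
qed

lemma card_divisors_not_3_parity:
  fixes m :: nat
  assumes "m > 0"
  shows "2 dvd int (card {d. d dvd m \<and> \<not> 3 dvd d}) - sq_or_3sq m"
proof -
  have fin: "finite {d. d dvd m}" using assms by (simp add: finite_divisors_nat)
  have "card ({d. d dvd m \<and> \<not> 3 dvd d} \<union> {d. d dvd m \<and> 3 dvd d})
      = card {d. d dvd m \<and> \<not> 3 dvd d} + card {d. d dvd m \<and> 3 dvd d}"
    using fin by (intro card_Un_disjoint) auto
  moreover have "{d. d dvd m \<and> \<not> 3 dvd d} \<union> {d. d dvd m \<and> 3 dvd d} = {d. d dvd m}"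
    by auto
  ultimately have split:
      "card {d. d dvd m} = card {d. d dvd m \<and> \<not> 3 dvd d} + card {d. d dvd m \<and> 3 dvd d}"
    by simp
  have three: "2 dvd int (card {d. d dvd m \<and> 3 dvd d}) - of_bool (\<exists>r. m = 3 * r\<^sup>2)"
  proof (cases "3 dvd m")
    case True
    then obtain m' where m': "m = 3 * m'" ..
    then have "{d. d dvd m \<and> 3 dvd d} = (\<lambda>d. 3 * d) ` {d. d dvd m'}"
      by (auto elim!: dvdE)
    moreover have "(\<exists>r. m = 3 * r\<^sup>2) \<longleftrightarrow> (\<exists>r. m' = r\<^sup>2)" using m' by auto
    moreover have "card ((\<lambda>d. 3 * d) ` {d. d dvd m'}) = card {d::nat. d dvd m'}"
      by (simp add: card_image inj_on_def)
    ultimately show ?thesis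
      using card_divisors_parity[of m'] assms m' by simp
  next
    case False
    then have empty: "{d. d dvd m \<and> 3 dvd d} = {}" by (auto intro: dvd_trans)
    have "\<not> (\<exists>r. m = 3 * r\<^sup>2)" using False by auto
    then show ?thesis unfolding empty by simp
  qed
  have "int (card {d. d dvd m \<and> \<not> 3 dvd d}) - sq_or_3sq m =
      (int (card {d. d dvd m}) - of_bool (\<exists>r. m = r\<^sup>2))
      - (int (card {d. d dvd m \<and> 3 dvd d}) - of_bool (\<exists>r. m = 3 * r\<^sup>2))
      - 2 * of_bool (\<exists>r. m = 3 * r\<^sup>2)"
    unfolding sq_or_3sq_def split of_nat_add by (simp add: algebra_simps)
  then show ?thesis
    using card_divisors_parity[OF assms] three by (simp add: dvd_diff)
qed

definition tri :: "nat \<Rightarrow> nat" where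
  "tri a = a * (a + 1) div 2"

lemma odd_square_eq_tri: "(2 * a + 1)\<^sup>2 = 8 * tri a + 1"
proof -
  have "2 * tri a = a * (a + 1)" by (simp add: tri_def)
  then show ?thesis by (simp add: power2_eq_square algebra_simps)
qed

lemma inj_tri: "inj tri"
proof (rule injI)
  fix a b assume "tri a = tri b"
  then have "(2 * a + 1)\<^sup>2 = (2 * b + 1)\<^sup>2" by (metis odd_square_eq_tri)
  then show "a = b" by simp
qed

lemma odd_eq_mult_square_iff:
  fixes m c :: nat
  assumes "odd m"
  shows "(\<exists>r. m = c * r\<^sup>2) \<longleftrightarrow> (\<exists>a. m = c * (8 * tri a + 1))"
proof
  assume "\<exists>r. m = c * r\<^sup>2"
  then obtain r where r: "m = c * r\<^sup>2" by blast
  with assms have "odd r" by auto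
  then obtain a where "r = 2 * a + 1" by (elim oddE)
  with r show "\<exists>a. m = c * (8 * tri a + 1)" by (metis odd_square_eq_tri)
qed (metis odd_square_eq_tri)

definition psi :: "int fps" where
  "psi = Abs_fps (\<lambda>i. of_bool (\<exists>a. i = tri a))"

lemma psi_nth: "psi $ i = of_bool (\<exists>a. i = tri a)"
  by (simp add: psi_def)

lemma psi_compose_X_power_nth:
  assumes "c > 0"
  shows "(psi oo fps_X ^ c) $ k = of_bool (\<exists>a. k = c * tri a)"
  using assms by (auto simp: fps_compose_X_power_nth psi_nth)

definition psi_4_12 :: "int fps" where
  "psi_4_12 = (psi oo fps_X ^ 4) + fps_X * (psi oo fps_X ^ 12)"

lemma psi_4_12_nth: "psi_4_12 $ n = sq_or_3sq (2 * n + 1)"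
proof -
  have square: "(\<exists>a. n = 4 * tri a) \<longleftrightarrow> (\<exists>r. 2 * n + 1 = r\<^sup>2)"
    using odd_eq_mult_square_iff[of "2 * n + 1" 1] by auto
  have "(n > 0 \<and> n - 1 = 12 * t) \<longleftrightarrow> 2 * n + 1 = 3 * (8 * t + 1)" for t
    by arith
  then have triple_square: "(n > 0 \<and> (\<exists>a. n - 1 = 12 * tri a)) \<longleftrightarrow> (\<exists>r. 2 * n + 1 = 3 * r\<^sup>2)"
    using odd_eq_mult_square_iff[of "2 * n + 1" 3] by auto
  have "psi_4_12 $ n = of_bool (\<exists>a. n = 4 * tri a) + of_bool (n > 0 \<and> (\<exists>a. n - 1 = 12 * tri a))"
    by (simp add: psi_4_12_def psi_compose_X_power_nth fps_X_mult_nth)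
  then show ?thesis
    unfolding square triple_square sq_or_3sq_def .
qed

section \<open>Representations by x^2 + 3y^2 with x and y odd\<close>

definition odd_reps :: "nat \<Rightarrow> (int \<times> int) set" where
  "odd_reps m = {(x, y). 0 < x \<and> 0 < y \<and> odd x \<and> odd y \<and> x\<^sup>2 + 3 * y\<^sup>2 = 4 * int m}"

text \<open>
  Writing \<alpha> = (x + y\<surd>-3)/2, each branch is \<alpha> \<mapsto> conj (\<alpha> \<zeta>) for a primitive sixth root
  of unity \<zeta>, followed by sign changes of the coordinates; the branch is chosen so that both new
  coordinates are odd.
\<close>

definition odd_reps_flip :: "int \<times> int \<Rightarrow> int \<times> int" where
  "odd_reps_flip = (\<lambda>(x, y). if 4 dvd x + y then ((x + 3 * y) div 2, \<bar>x - y\<bar> div 2)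
                             else (\<bar>x - 3 * y\<bar> div 2, (x + y) div 2))"

lemma int_half_eqI: "a = 2 * b \<Longrightarrow> a div 2 = (b :: int)" "a = 2 * b \<Longrightarrow> \<bar>a\<bar> div 2 = \<bar>b\<bar>"
  by (simp_all add: abs_mult)

lemma odd_reps_flip_sum:
  assumes "x + y = 4 * k"
  shows "odd_reps_flip (x, y) = (2 * k + y, \<bar>2 * k - y\<bar>)"
  using assms by (auto simp: odd_reps_flip_def intro!: int_half_eqI)

lemma odd_reps_flip_diff:
  assumes "x - y = 4 * k" "\<not> 4 dvd x + y"
  shows "odd_reps_flip (x, y) = (\<bar>2 * k - y\<bar>, 2 * k + y)"
  using assms by (auto simp: odd_reps_flip_def intro!: int_half_eqI)

lemma odd_reps_flip_sum_case:
  assumes "(x, y) \<in> odd_reps m" "x + y = 4 * k"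
  shows "odd_reps_flip (x, y) \<in> odd_reps m"
    and "odd_reps_flip (odd_reps_flip (x, y)) = (x, y)"
    and "odd_reps_flip (x, y) = (x, y) \<longleftrightarrow> x = 3 * y"
proof -
  have pos: "x > 0" "y > 0" and odd: "odd x" "odd y" and eq: "x\<^sup>2 + 3 * y\<^sup>2 = 4 * int m"
    using assms(1) by (auto simp: odd_reps_def)
  have x: "x = 4 * k - y" using assms(2) by simp
  have flip: "odd_reps_flip (x, y) = (2 * k + y, \<bar>2 * k - y\<bar>)"
    using assms(2) by (rule odd_reps_flip_sum)
  have "2 * k - y \<noteq> 0" using odd by presburger
  moreover have "(2 * k + y)\<^sup>2 + 3 * \<bar>2 * k - y\<bar>\<^sup>2 = x\<^sup>2 + 3 * y\<^sup>2"
    unfolding x by (simp add: power2_eq_square algebra_simps)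
  ultimately show "odd_reps_flip (x, y) \<in> odd_reps m"
    unfolding flip using assms(2) pos odd eq by (auto simp: odd_reps_def)
  show "odd_reps_flip (odd_reps_flip (x, y)) = (x, y)"
  proof (cases "2 * k \<ge> y")
    case True
    then show ?thesis unfolding flip using x pos by (subst odd_reps_flip_sum[of _ _ k]) auto
  next
    case False
    have "\<not> 4 dvd (2 * k + y) + (y - 2 * k)" using odd by presburger
    then show ?thesis unfolding flip using x False pos by (subst odd_reps_flip_diff[of _ _ k]) auto
  qed
  show "odd_reps_flip (x, y) = (x, y) \<longleftrightarrow> x = 3 * y"
    unfolding flip using x pos by auto
qed

lemma odd_reps_flip_diff_case:
  assumes "(x, y) \<in> odd_reps m" "x - y = 4 * k" "\<not> 4 dvd x + y"
  shows "odd_reps_flip (x, y) \<in> odd_reps m"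
    and "odd_reps_flip (odd_reps_flip (x, y)) = (x, y)"
    and "odd_reps_flip (x, y) = (x, y) \<longleftrightarrow> x = y"
proof -
  have pos: "x > 0" "y > 0" and odd: "odd x" "odd y" and eq: "x\<^sup>2 + 3 * y\<^sup>2 = 4 * int m"
    using assms(1) by (auto simp: odd_reps_def)
  have x: "x = 4 * k + y" using assms(2) by simp
  have flip: "odd_reps_flip (x, y) = (\<bar>2 * k - y\<bar>, 2 * k + y)"
    using assms(2,3) by (rule odd_reps_flip_diff)
  have "2 * k - y \<noteq> 0" using odd by presburger
  moreover have "\<bar>2 * k - y\<bar>\<^sup>2 + 3 * (2 * k + y)\<^sup>2 = x\<^sup>2 + 3 * y\<^sup>2"
    unfolding x by (simp add: power2_eq_square algebra_simps)
  ultimately show "odd_reps_flip (x, y) \<in> odd_reps m"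
    unfolding flip using assms(2) pos odd eq by (auto simp: odd_reps_def)
  show "odd_reps_flip (odd_reps_flip (x, y)) = (x, y)"
  proof (cases "2 * k \<ge> y")
    case True
    then show ?thesis unfolding flip using x pos by (subst odd_reps_flip_sum[of _ _ k]) auto
  next
    case False
    have "\<not> 4 dvd (y - 2 * k) + (2 * k + y)" using odd by presburger
    then show ?thesis
      unfolding flip using x False pos by (subst odd_reps_flip_diff[of _ _ "- k"]) auto
  qed
  show "odd_reps_flip (x, y) = (x, y) \<longleftrightarrow> x = y"
    unfolding flip using x pos by auto
qed

lemma odd_reps_flip:
  assumes "(x, y) \<in> odd_reps m"
  shows "odd_reps_flip (x, y) \<in> odd_reps m"
    and "odd_reps_flip (odd_reps_flip (x, y)) = (x, y)"
    and "odd_reps_flip (x, y) = (x, y) \<longleftrightarrow> x = y \<or> x = 3 * y"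
proof -
  have "odd x" "odd y" using assms by (auto simp: odd_reps_def)
  then have "4 dvd x + y \<or> 4 dvd x - y" by presburger
  then consider (sum) k where "x + y = 4 * k" | (diff) k where "x - y = 4 * k" "\<not> 4 dvd x + y"
    by (auto elim!: dvdE)
  then have "odd_reps_flip (x, y) \<in> odd_reps m \<and> odd_reps_flip (odd_reps_flip (x, y)) = (x, y)
      \<and> (odd_reps_flip (x, y) = (x, y) \<longleftrightarrow> x = y \<or> x = 3 * y)"
  proof cases
    case sum
    moreover have "x \<noteq> y" using sum \<open>odd y\<close> by presburger
    ultimately show ?thesis using odd_reps_flip_sum_case[OF assms] by blast
  next
    case diff
    moreover have "x \<noteq> 3 * y" using diff \<open>odd y\<close> by presburger
    ultimately show ?thesis using odd_reps_flip_diff_case[OF assms] by blast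
  qed
  then show "odd_reps_flip (x, y) \<in> odd_reps m"
    and "odd_reps_flip (odd_reps_flip (x, y)) = (x, y)"
    and "odd_reps_flip (x, y) = (x, y) \<longleftrightarrow> x = y \<or> x = 3 * y"
    by blast+
qed

lemma finite_odd_reps: "finite (odd_reps m)"
proof (rule finite_subset)
  show "odd_reps m \<subseteq> {0..4 * int m} \<times> {0..4 * int m}"
  proof safe
    fix x y assume "(x, y) \<in> odd_reps m"
    then have "0 < x" "0 < y" "x\<^sup>2 + 3 * y\<^sup>2 = 4 * int m" by (auto simp: odd_reps_def)
    moreover have "x \<le> x\<^sup>2" "y \<le> y\<^sup>2" using \<open>0 < x\<close> \<open>0 < y\<close>
      by (simp_all add: power2_eq_square)
    ultimately show "x \<in> {0..4 * int m}" "y \<in> {0..4 * int m}" by auto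
  qed
qed simp

lemma card_odd_reps_diagonal:
  assumes "odd m" "c \<in> {1, 3}"
  shows "card {(x, y) \<in> odd_reps m. x = int c * y} = card {r. c * r\<^sup>2 = m}"
proof -
  have "{(x, y) \<in> odd_reps m. x = int c * y} = (\<lambda>r. (int c * int r, int r)) ` {r. c * r\<^sup>2 = m}"
  proof (intro equalityI subsetI)
    fix p assume "p \<in> {(x, y) \<in> odd_reps m. x = int c * y}"
    then obtain y where p: "p = (int c * y, y)" "y > 0" "(int c * y)\<^sup>2 + 3 * y\<^sup>2 = 4 * int m"
      by (auto simp: odd_reps_def)
    then have "int (c * (nat y)\<^sup>2) = int m"
      using assms(2) by (auto simp: power2_eq_square)
    then have "c * (nat y)\<^sup>2 = m"
      by (simp only: of_nat_eq_iff)
    then show "p \<in> (\<lambda>r. (int c * int r, int r)) ` {r. c * r\<^sup>2 = m}"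
      using p by (intro image_eqI[of _ _ "nat y"]) auto
  next
    fix p assume "p \<in> (\<lambda>r. (int c * int r, int r)) ` {r. c * r\<^sup>2 = m}"
    then obtain r where p: "p = (int c * int r, int r)" and r: "c * r\<^sup>2 = m" by auto
    then have "odd r" "odd c" using assms by auto
    then show "p \<in> {(x, y) \<in> odd_reps m. x = int c * y}"
      using p r assms(2)
      by (auto simp: odd_reps_def power2_eq_square odd_pos simp flip: of_nat_mult)
  qed
  then show ?thesis
    by (simp add: card_image inj_on_def)
qed

lemma odd_reps_parity:
  assumes "odd m"
  shows "2 dvd int (card (odd_reps m)) - sq_or_3sq m"
proof -
  let ?D = "\<lambda>c. {(x, y) \<in> odd_reps m. x = int c * y}"
  have "2 dvd (\<Sum>p\<in>odd_reps m. 1::int) - (\<Sum>p\<in>{p\<in>odd_reps m. odd_reps_flip p = p}. 1)"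
    using finite_odd_reps odd_reps_flip(1,2) by (intro sum_involution_dvd) auto
  moreover have "{p\<in>odd_reps m. odd_reps_flip p = p} = ?D 1 \<union> ?D 3"
    using odd_reps_flip(3) by auto
  moreover have fin: "finite (?D c)" for c
    using finite_odd_reps by (rule rev_finite_subset) auto
  then have "card (?D 1 \<union> ?D 3) = card (?D 1) + card (?D 3)"
    by (intro card_Un_disjoint fin) (auto simp: odd_reps_def)
  ultimately show ?thesis
    using card_odd_reps_diagonal[OF assms, of 1] card_odd_reps_diagonal[OF assms, of 3]
      card_mult_square_roots[of 1 m] card_mult_square_roots[of 3 m]
    by (simp add: sq_or_3sq_def)
qed

lemma psi_mult_psi3_nth:
  "(psi * (psi oo fps_X ^ 3)) $ n = int (card {(a, b). tri a + 3 * tri b = n})"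
proof -
  let ?I = "{i\<in>{0..n}. (\<exists>a. i = tri a) \<and> (\<exists>b. n - i = 3 * tri b)}"
  have "(psi * (psi oo fps_X ^ 3)) $ n = int (card ?I)"
    by (simp add: fps_mult_nth psi_nth psi_compose_X_power_nth Int_def)
  also have "?I = (\<lambda>(a, b). tri a) ` {(a, b). tri a + 3 * tri b = n}"
  proof (intro equalityI subsetI)
    fix i assume "i \<in> ?I"
    then obtain a b where "i = tri a" "n - i = 3 * tri b" "i \<le> n" by auto
    then show "i \<in> (\<lambda>(a, b). tri a) ` {(a, b). tri a + 3 * tri b = n}"
      by (intro image_eqI[of _ _ "(a, b)"]) simp_all
  next
    fix i assume "i \<in> (\<lambda>(a, b). tri a) ` {(a, b). tri a + 3 * tri b = n}"
    then obtain a b where "i = tri a" "tri a + 3 * tri b = n" by auto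
    then show "i \<in> ?I" by auto
  qed
  also have "card \<dots> = card {(a, b). tri a + 3 * tri b = n}"
  proof (rule card_image, rule inj_onI)
    fix p q assume "p \<in> {(a, b). tri a + 3 * tri b = n}" "q \<in> {(a, b). tri a + 3 * tri b = n}"
      and "(\<lambda>(a, b). tri a) p = (\<lambda>(a, b). tri a) q"
    moreover obtain a b a' b' where "p = (a, b)" "q = (a', b')" by force
    ultimately have "tri a = tri a'" "tri b = tri b'" "p = (a, b)" "q = (a', b')" by auto
    then show "p = q" using inj_tri by (simp add: inj_eq)
  qed
  finally show ?thesis .
qed

lemma card_tri_pairs_eq_card_odd_reps:
  "card {(a, b). tri a + 3 * tri b = n} = card (odd_reps (2 * n + 1))"
proof -
  have square: "(2 * int a + 1)\<^sup>2 = 8 * int (tri a) + 1" for a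
    using arg_cong[OF odd_square_eq_tri[of a], of int] by (simp add: ac_simps)
  have "(\<lambda>(a, b). (2 * int a + 1, 2 * int b + 1)) ` {(a, b). tri a + 3 * tri b = n}
      = odd_reps (2 * n + 1)"
  proof (intro equalityI subsetI)
    fix p assume "p \<in> (\<lambda>(a, b). (2 * int a + 1, 2 * int b + 1)) ` {(a, b). tri a + 3 * tri b = n}"
    then obtain a b where "p = (2 * int a + 1, 2 * int b + 1)" "tri a + 3 * tri b = n"
      by auto
    then show "p \<in> odd_reps (2 * n + 1)"
      by (auto simp: odd_reps_def square)
  next
    fix p assume "p \<in> odd_reps (2 * n + 1)"
    then obtain x y where p: "p = (x, y)" "0 < x" "0 < y" "odd x" "odd y"
      and eq: "x\<^sup>2 + 3 * y\<^sup>2 = 4 * int (2 * n + 1)"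
      by (auto simp: odd_reps_def)
    have half: "z = 2 * int (nat (z div 2)) + 1" if "0 < z" "odd z" for z :: int
      using that by (auto elim!: oddE)
    define a b where "a = nat (x div 2)" and "b = nat (y div 2)"
    have xy: "x = 2 * int a + 1" "y = 2 * int b + 1"
      using p half unfolding a_def b_def by blast+
    with eq have "int (tri a + 3 * tri b) = int n"
      by (simp add: square)
    then have "tri a + 3 * tri b = n"
      by (simp only: of_nat_eq_iff)
    with p xy show "p \<in> (\<lambda>(a, b). (2 * int a + 1, 2 * int b + 1)) ` {(a, b). tri a + 3 * tri b = n}"
      by auto
  qed
  moreover have "inj_on (\<lambda>(a, b). (2 * int a + 1, 2 * int b + 1)) {(a, b). tri a + 3 * tri b = n}"
    by (auto simp: inj_on_def)
  ultimately show ?thesis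
    by (metis card_image)
qed

lemma psi_mult_psi3_cong: "fps_cong 2 (psi * (psi oo fps_X ^ 3)) psi_4_12"
  unfolding fps_cong_def psi_mult_psi3_nth card_tri_pairs_eq_card_odd_reps psi_4_12_nth
  by (intro allI odd_reps_parity) simp

section \<open>The generating function modulo 4\<close>

definition divisor_gf :: "nat \<Rightarrow> nat \<Rightarrow> int fps" where
  "divisor_gf t D = (\<Sum>j\<in>allowed_parts t D. fps_geom j - 1)"

lemma sum_geom_minus_one_nth:
  assumes "finite A" "k > 0"
  shows "(\<Sum>j\<in>A. fps_geom j - 1 :: 'a::comm_ring_1 fps) $ k = of_nat (card {j\<in>A. j dvd k})"
  using assms by (simp add: fps_sum_nth Int_def conj_commute)

lemma allowed_parts_dvd_odd:
  assumes "odd k" "k \<le> D"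
  shows "{j\<in>allowed_parts t D. j dvd k} = {d. d dvd k \<and> \<not> 3 dvd d}"
proof (intro equalityI subsetI)
  fix d assume d: "d \<in> {d. d dvd k \<and> \<not> 3 dvd d}"
  then have "1 \<le> d" "d \<le> k" using assms(1) by (auto intro: dvd_imp_le simp: odd_pos Suc_le_eq)
  moreover have "\<not> 2 * t dvd d" using d assms(1) by (metis dvd_mult_left dvd_trans mem_Collect_eq)
  ultimately show "d \<in> {j\<in>allowed_parts t D. j dvd k}"
    using d assms(2) by (auto simp: allowed_parts_def)
qed (auto simp: allowed_parts_def)

lemma divisor_gf_odd_nth_cong:
  assumes "odd k" "k \<le> D"
  shows "2 dvd (divisor_gf t D - fps_X * (psi_4_12 oo fps_X ^ 2)) $ k"
proof -
  have "(fps_X * (psi_4_12 oo fps_X ^ 2)) $ k = sq_or_3sq k"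
    using assms(1) by (auto simp: fps_X_mult_nth fps_compose_X_power_nth psi_4_12_nth elim!: oddE)
  then show ?thesis
    using card_divisors_not_3_parity[of k] assms
    by (simp add: divisor_gf_def sum_geom_minus_one_nth allowed_parts_dvd_odd odd_pos)
qed

definition psi_2_6_sq :: "int fps" where
  "psi_2_6_sq =
     (psi oo fps_X ^ 2) * (psi oo fps_X ^ 2) + fps_X * ((psi oo fps_X ^ 6) * (psi oo fps_X ^ 6))"

lemma psi_4_12_square:
  "psi_4_12 * psi_4_12
     = (psi_2_6_sq oo fps_X ^ 2) + 2 * (fps_X * (psi * (psi oo fps_X ^ 3) oo fps_X ^ 4))"
proof -
  let ?a = "psi oo fps_X ^ 4" and ?b = "psi oo fps_X ^ 12"
  have "psi_2_6_sq oo fps_X ^ 2 = ?a * ?a + fps_X ^ 2 * (?b * ?b)"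
    by (simp add: psi_2_6_sq_def fps_compose_add_distrib fps_compose_mult_distrib
        fps_compose_X_power_compose)
  moreover have "psi * (psi oo fps_X ^ 3) oo fps_X ^ 4 = ?a * ?b"
    by (simp add: fps_compose_mult_distrib fps_compose_X_power_compose)
  ultimately show ?thesis
    unfolding psi_4_12_def by (simp add: algebra_simps power2_eq_square)
qed

lemma psi_2_6_sq_cong: "fps_cong 2 psi_2_6_sq psi_4_12"
proof -
  have "fps_cong 2 psi_2_6_sq
      ((psi oo fps_X ^ 2 oo fps_X ^ 2) + fps_X * (psi oo fps_X ^ 6 oo fps_X ^ 2))"
    unfolding psi_2_6_sq_def
    by (intro fps_cong_add fps_cong_mult fps_cong_refl fps_square_cong_compose_X2)
  then show ?thesis
    by (simp add: psi_4_12_def fps_compose_X_power_compose)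
qed

lemma partition_gf_square_cong:
  "fps_cong 4 (partition_gf t D * partition_gf t D)
     ((partition_gf t D oo fps_X ^ 2) * (1 + 2 * divisor_gf t D))"
  unfolding partition_gf_def divisor_gf_def
  by (rule prod_geom_square_cong) (auto simp: allowed_parts_def)

lemma shifted_psi_4_12_mult_psi_2_6_sq_cong:
  "fps_cong 2 (fps_X * (psi_4_12 oo fps_X ^ 2) * (psi_2_6_sq oo fps_X ^ 2))
     (fps_X * (psi_4_12 oo fps_X ^ 4))"
proof -
  have "fps_X * (psi_4_12 oo fps_X ^ 2) * (psi_2_6_sq oo fps_X ^ 2)
      = fps_X * (psi_4_12 * psi_2_6_sq oo fps_X ^ 2)"
    by (simp add: fps_compose_mult_distrib)
  also have "fps_cong 2 \<dots> (fps_X * (psi_4_12 * psi_4_12 oo fps_X ^ 2))"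
    by (intro fps_cong_mult fps_cong_refl fps_cong_compose_X_power psi_2_6_sq_cong) simp
  also have "fps_cong 2 \<dots> (fps_X * (psi_4_12 oo fps_X ^ 2 oo fps_X ^ 2))"
    by (intro fps_cong_mult fps_cong_refl fps_cong_compose_X_power fps_square_cong_compose_X2) simp
  finally show ?thesis
    by (simp add: fps_compose_X_power_compose)
qed

lemma divisor_gf_psi_odd_nth_even:
  assumes "odd k" "k \<le> D"
  shows "2 dvd (divisor_gf t D * (psi_2_6_sq oo fps_X ^ 2)
                + fps_X * (psi * (psi oo fps_X ^ 3) oo fps_X ^ 4)) $ k"
proof -
  define T where "T = fps_X * (psi_4_12 oo fps_X ^ 2)"
  let ?F = "fps_X * (psi * (psi oo fps_X ^ 3) oo fps_X ^ 4)"
  let ?E = "psi_2_6_sq oo fps_X ^ 2" and ?Z = "fps_X * (psi_4_12 oo fps_X ^ 4)"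
  have "fps_cong 2 ?F ?Z"
    by (intro fps_cong_mult fps_cong_refl fps_cong_compose_X_power psi_mult_psi3_cong) simp
  then have "fps_cong 2 (T * ?E + ?F) (?Z + ?Z)"
    unfolding T_def by (intro fps_cong_add shifted_psi_4_12_mult_psi_2_6_sq_cong)
  then have "2 dvd (T * ?E + ?F) $ k - (?Z + ?Z) $ k"
    by (rule fps_cong_nth)
  moreover have "2 dvd (?Z + ?Z) $ k"
    unfolding fps_add_nth by (simp flip: mult_2)
  ultimately have "2 dvd (T * ?E + ?F) $ k"
    using dvd_diff_left_iff by blast
  moreover have "2 dvd (?E * (divisor_gf t D - T)) $ k"
    using divisor_gf_odd_nth_cong assms unfolding T_def
    by (intro dvd_odd_nth_compose_X2_mult) auto
  moreover have "divisor_gf t D * ?E + ?F = ?E * (divisor_gf t D - T) + (T * ?E + ?F)"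
    by (simp add: algebra_simps)
  ultimately show ?thesis
    by simp
qed

lemma partition_psi_square_odd_nth:
  assumes "odd i" "i \<le> D"
  shows "4 dvd ((partition_gf t D * psi_4_12) * (partition_gf t D * psi_4_12)) $ i"
proof -
  define B S where "B = partition_gf t D" and "S = divisor_gf t D"
  define F where "F = psi * (psi oo fps_X ^ 3) oo fps_X ^ 4"
  define W where "W = S * (psi_2_6_sq oo fps_X ^ 2) + fps_X * F"
  have "(B * psi_4_12) * (B * psi_4_12) = (B * B) * ((psi_2_6_sq oo fps_X ^ 2) + 2 * (fps_X * F))"
    unfolding F_def psi_4_12_square[symmetric] by (simp add: ac_simps)
  also have "fps_cong 4 \<dots>
      ((B oo fps_X ^ 2) * (1 + 2 * S) * ((psi_2_6_sq oo fps_X ^ 2) + 2 * (fps_X * F)))"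
    unfolding B_def S_def by (rule fps_cong_mult[OF partition_gf_square_cong fps_cong_refl])
  also have "\<dots> = ((B * psi_2_6_sq oo fps_X ^ 2) + 2 * ((B oo fps_X ^ 2) * W))
        + fps_const 4 * ((B oo fps_X ^ 2) * S * fps_X * F)"
    by (simp add: W_def fps_compose_mult_distrib algebra_simps numeral_fps_const
        fps_const_mult[symmetric])
  also have "fps_cong 4 \<dots> ((B * psi_2_6_sq oo fps_X ^ 2) + 2 * ((B oo fps_X ^ 2) * W))"
    by (rule fps_cong_add_multiple)
  finally have cong: "4 dvd ((B * psi_4_12) * (B * psi_4_12)) $ i
      - ((B * psi_2_6_sq oo fps_X ^ 2) + 2 * ((B oo fps_X ^ 2) * W)) $ i"
    by (rule fps_cong_nth)
  have "2 dvd ((B oo fps_X ^ 2) * W) $ i"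
    using divisor_gf_psi_odd_nth_even assms unfolding W_def S_def F_def
    by (intro dvd_odd_nth_compose_X2_mult) auto
  moreover have "(B * psi_2_6_sq oo fps_X ^ 2) $ i = 0"
    using assms by (simp add: fps_compose_X_power_nth)
  ultimately have "4 dvd ((B * psi_2_6_sq oo fps_X ^ 2) + 2 * ((B oo fps_X ^ 2) * W)) $ i"
    by (auto simp: numeral_fps_const elim!: dvdE)
  with cong show ?thesis
    unfolding B_def by (simp add: dvd_diff_left_iff)
qed

lemma partition_psi_odd_nth_even:
  assumes "odd i" "i \<le> D"
  shows "even ((partition_gf t D * psi_4_12) $ i)"
proof (rule even_odd_nth_if_square[OF _ _ assms])
  have "(\<Prod>j\<in>A. fps_geom j) $ 0 = (1 :: int)" for A :: "nat set"
    by (induction A rule: infinite_finite_induct) simp_all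
  moreover have "sq_or_3sq 1 = 1"
    by (auto simp: sq_or_3sq_def intro: exI[of _ 1])
  ultimately show "odd ((partition_gf t D * psi_4_12) $ 0)"
    by (simp add: partition_gf_def psi_4_12_nth)
  show "\<forall>i\<le>D. odd i \<longrightarrow> 4 dvd ((partition_gf t D * psi_4_12) * (partition_gf t D * psi_4_12)) $ i"
    using partition_psi_square_odd_nth by blast
qed

lemma partition_gf_square_odd_nth:
  assumes "odd N" "N \<le> D"
  shows "4 dvd (partition_gf t D * partition_gf t D) $ N
                 - 2 * (partition_gf t D * psi_4_12) $ (N div 2)"
proof -
  define B S where "B = partition_gf t D" and "S = divisor_gf t D"
  define T where "T = fps_X * (psi_4_12 oo fps_X ^ 2)"
  let ?s = "((B oo fps_X ^ 2) * S) $ N" and ?t = "((B oo fps_X ^ 2) * T) $ N"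
  have "fps_cong 4 (B * B) ((B oo fps_X ^ 2) * (1 + 2 * S))"
    unfolding B_def S_def by (rule partition_gf_square_cong)
  then have "4 dvd (B * B) $ N - ((B oo fps_X ^ 2) * (1 + 2 * S)) $ N"
    by (rule fps_cong_nth)
  moreover have
    "(B oo fps_X ^ 2) * (1 + 2 * S) = (B oo fps_X ^ 2) + fps_const 2 * ((B oo fps_X ^ 2) * S)"
    by (simp add: algebra_simps numeral_fps_const)
  ultimately have square: "4 dvd (B * B) $ N - 2 * ?s"
    using assms(1) by (simp add: fps_compose_X_power_nth)
  have "2 dvd ((B oo fps_X ^ 2) * (S - T)) $ N"
    using divisor_gf_odd_nth_cong assms unfolding S_def T_def
    by (intro dvd_odd_nth_compose_X2_mult) auto
  then obtain c where c: "?s - ?t = 2 * c"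
    by (auto simp only: right_diff_distrib fps_sub_nth elim!: dvdE)
  have "?t = (B * psi_4_12) $ (N div 2)"
    using assms(1)
    by (auto simp: T_def fps_compose_mult_distrib[symmetric] fps_X_mult_nth fps_compose_X_power_nth
        mult.left_commute elim!: oddE)
  then have "(B * B) $ N - 2 * (B * psi_4_12) $ (N div 2) = ((B * B) $ N - 2 * ?s) + 4 * c"
    using c by (simp add: algebra_simps)
  moreover have "4 dvd ((B * B) $ N - 2 * ?s) + 4 * c"
    using square by simp
  ultimately show ?thesis
    unfolding B_def[symmetric] by (simp only:)
qed

theorem mainTheorem2:
  fixes t n :: nat
  assumes "t > 0" and "\<not> (3 dvd t)" and "n > 0"
  shows "b_part 2 3 (2 * t) (4 * n + 3) mod 4 = 0"
proof -
  let ?N = "4 * n + 3"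
  have "?N div 2 = 2 * n + 1" by simp
  have "int (b_part 2 3 (2 * t) ?N) = (partition_gf t ?N * partition_gf t ?N) $ ?N"
    by (rule b_part_eq_partition_gf_square) simp
  moreover have "4 dvd (partition_gf t ?N * partition_gf t ?N) $ ?N
      - 2 * (partition_gf t ?N * psi_4_12) $ (2 * n + 1)"
    using partition_gf_square_odd_nth[of ?N ?N t] by (simp add: \<open>?N div 2 = 2 * n + 1\<close>)
  moreover obtain c where "(partition_gf t ?N * psi_4_12) $ (2 * n + 1) = 2 * c"
    using partition_psi_odd_nth_even[of "2 * n + 1" ?N t] by (auto elim!: evenE)
  ultimately have "4 dvd int (b_part 2 3 (2 * t) ?N)"
    by (simp add: dvd_diff_left_iff)
  then show ?thesis
    by presburger
qed

end
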